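(* Let $k$ be a field of prime characteristic $p$ and let $H_1=\{x_1^p\}^S$ be the $T$-space of $k_0\langle X\rangle$ generated by $x_1^p$. Then for any $u\in H_1$ and any $v\in k_0\langle X\rangle$, $[u,v]=uv-vu\in H_1$.
   Context: $X=\{x_1,x_2,\ldots\}$ is countably infinite; $k_0\langle X\rangle$ is the free associative (non-unital) $k$-algebra on $X$. A $T$-space is a $k$-subspace of $k_0\langle X\rangle$ invariant under every algebra endomorphism of $k_0\langle X\rangle$; $\{f\}^S$ is the $T$-space generated by $f$. *)

theory Defs
  imports Main "HOL-Computational_Algebra.Primes"
begin

text \<open>The free non-unital associative algebra k_0<X> on X = {x_0, x_1, ...} (indexed by nat;
  the paper's x_1 is our variable 0). An element is a finitely supported coefficient function
  on words (nat list), with zero coefficient at the empty word (no constant term).\<close>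

definition ncp :: "(nat list \<Rightarrow> 'k::field) set" where
  "ncp = {f. finite {w. f w \<noteq> 0} \<and> f [] = 0}"

definition nc_add :: "(nat list \<Rightarrow> 'k::field) \<Rightarrow> (nat list \<Rightarrow> 'k) \<Rightarrow> nat list \<Rightarrow> 'k" where
  "nc_add f g = (\<lambda>w. f w + g w)"

definition nc_diff :: "(nat list \<Rightarrow> 'k::field) \<Rightarrow> (nat list \<Rightarrow> 'k) \<Rightarrow> nat list \<Rightarrow> 'k" where
  "nc_diff f g = (\<lambda>w. f w - g w)"

definition nc_smult :: "'k::field \<Rightarrow> (nat list \<Rightarrow> 'k) \<Rightarrow> nat list \<Rightarrow> 'k" where
  "nc_smult c f = (\<lambda>w. c * f w)"

definition nc_zero :: "nat list \<Rightarrow> 'k::field" where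
  "nc_zero = (\<lambda>w. 0)"

definition nc_mult :: "(nat list \<Rightarrow> 'k::field) \<Rightarrow> (nat list \<Rightarrow> 'k) \<Rightarrow> nat list \<Rightarrow> 'k" where
  "nc_mult f g = (\<lambda>w. \<Sum>i\<le>length w. f (take i w) * g (drop i w))"

definition nc_var :: "nat \<Rightarrow> nat list \<Rightarrow> 'k::field" where
  "nc_var i = (\<lambda>w. if w = [i] then 1 else 0)"

text \<open>Positive powers f^n (n \<ge> 1) in the non-unital algebra; nc_pow f 0 is unused.\<close>
fun nc_pow :: "(nat list \<Rightarrow> 'k::field) \<Rightarrow> nat \<Rightarrow> nat list \<Rightarrow> 'k" where
  "nc_pow f 0 = nc_zero"
| "nc_pow f (Suc 0) = f"
| "nc_pow f (Suc (Suc n)) = nc_mult f (nc_pow f (Suc n))"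

definition nc_endo :: "((nat list \<Rightarrow> 'k::field) \<Rightarrow> (nat list \<Rightarrow> 'k)) \<Rightarrow> bool" where
  "nc_endo \<phi> \<longleftrightarrow> (\<forall>f\<in>ncp. \<phi> f \<in> ncp)
     \<and> (\<forall>f\<in>ncp. \<forall>g\<in>ncp. \<phi> (nc_add f g) = nc_add (\<phi> f) (\<phi> g))
     \<and> (\<forall>c. \<forall>f\<in>ncp. \<phi> (nc_smult c f) = nc_smult c (\<phi> f))
     \<and> (\<forall>f\<in>ncp. \<forall>g\<in>ncp. \<phi> (nc_mult f g) = nc_mult (\<phi> f) (\<phi> g))"

definition nc_tspace :: "(nat list \<Rightarrow> 'k::field) set \<Rightarrow> bool" where
  "nc_tspace V \<longleftrightarrow> V \<subseteq> ncp \<and> nc_zero \<in> V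
     \<and> (\<forall>f\<in>V. \<forall>g\<in>V. nc_add f g \<in> V)
     \<and> (\<forall>c. \<forall>f\<in>V. nc_smult c f \<in> V)
     \<and> (\<forall>\<phi>. nc_endo \<phi> \<longrightarrow> (\<forall>f\<in>V. \<phi> f \<in> V))"

definition nc_tspace_gen :: "(nat list \<Rightarrow> 'k::field) \<Rightarrow> (nat list \<Rightarrow> 'k) set" where
  "nc_tspace_gen f = \<Inter> {V. nc_tspace V \<and> f \<in> V}"

end

theory Submission
  imports Defs "HOL-Library.Poly_Mapping"
begin

text \<open>
  In characteristic p every commutator [y, a^p] is a linear combination of p-th powers.
  Put c = [a, y] and split (a + t c)^p = \<Sum>_j t^j D_j by degree in c; the linear part
  D_1 = \<Sum>_i a^i c a^(p-1-i) telescopes to [a^p, y]. Summing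
  t^(-1) ((a + t c)^p - a^p - t^p c^p) over t = 1, ..., p-1 gives \<Sum>_j (\<Sum>_t t^(j-1)) D_j,
  and the power sums \<Sum>_t t^m vanish mod p for 0 < m < p-1, while \<Sum>_t t^0 = -1.
  Hence [h^p, v] lies in H_1 for all h and v. Finally, the elements u with [\<psi> u, v] in H_1
  for every endomorphism \<psi> and every v form a T-space containing x_1^p, so by minimality
  they include all of H_1.
\<close>

section \<open>The free algebra as a monoid algebra of words\<close>

text \<open>
  With concatenation as addition, the finitely supported functions on words (type word_poly)
  form the free unital algebra k\<langle>X\<rangle>; ncp consists of the coefficient functions of its
  elements without constant term.
\<close>

instantiation list :: (type) monoid_add
begin
definition zero_list_def: "0 = []"
definition plus_list_def: "(xs::'a list) + ys = xs @ ys"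
instance by standard (auto simp: zero_list_def plus_list_def)
end

type_synonym 'k word_poly = "nat list \<Rightarrow>\<^sub>0 'k"

abbreviation lookup where "lookup \<equiv> Poly_Mapping.lookup"
abbreviation keys where "keys \<equiv> Poly_Mapping.keys"
abbreviation single where "single \<equiv> Poly_Mapping.single"

lemma lookup_mult_words:
  fixes F G :: "'k::semiring_0 word_poly"
  shows "lookup (F * G) w = (\<Sum>i\<le>length w. lookup F (take i w) * lookup G (drop i w))"
proof -
  let ?c = "\<lambda>l. lookup F l * (lookup G (drop (length l) w) when take (length l) w = l)"
  have split: "(\<Sum>q. lookup G q when w = l + q) = (lookup G (drop (length l) w) when take (length l) w = l)"
    for l
  proof -
    have "(\<Sum>q. lookup G q when w = l + q)
        = (\<Sum>q. (lookup G q when take (length l) w = l) when q = drop (length l) w)"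
      by (intro Sum_any.cong)
        (auto simp: plus_list_def append_eq_conv_conj when_def, metis append_take_drop_id)
    then show ?thesis by simp
  qed
  have "lookup (F * G) w = (\<Sum>l. ?c l)"
    by (simp only: lookup_mult split)
  also have "\<dots> = (\<Sum>l\<in>(\<lambda>i. take i w) ` {..length w}. ?c l)"
  proof (rule Sum_any.expand_superset)
    show "{l. ?c l \<noteq> 0} \<subseteq> (\<lambda>i. take i w) ` {..length w}"
    proof
      fix l assume "l \<in> {l. ?c l \<noteq> 0}"
      then have l: "take (length l) w = l" by (auto simp: when_def split: if_splits)
      have "length (take (length l) w) \<le> length w" by simp
      with l have "length l \<le> length w" by simp
      with l show "l \<in> (\<lambda>i. take i w) ` {..length w}" by force
    qed
  qed simp
  also have "\<dots> = (\<Sum>i\<le>length w. lookup F (take i w) * lookup G (drop i w))"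
  proof (subst sum.reindex)
    show "inj_on (\<lambda>i. take i w) {..length w}"
      by (rule inj_on_inverseI[where g = length]) simp
  qed (simp add: min_absorb1)
  finally show ?thesis .
qed

lemma lookup_mult_Nil: "lookup ((F::'k::semiring_0 word_poly) * G) [] = lookup F [] * lookup G []"
  by (simp add: lookup_mult_words)

lemma sum_single_lookup: "(\<Sum>w\<in>keys F. single w (lookup F w)) = F"
  by (rule poly_mapping_eqI) (simp add: lookup_sum lookup_single when_def in_keys_iff)

definition scal :: "'k::semiring_1 \<Rightarrow> 'k word_poly" where
  "scal c = single 0 c"

lemma scal_mult: "scal a * scal b = scal (a * b)"
  by (simp add: scal_def mult_single)

lemma scal_add: "scal (a + b) = scal a + scal b"
  by (simp add: scal_def single_add)

lemma scal_0 [simp]: "scal 0 = 0" and scal_1 [simp]: "scal 1 = 1"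
  by (simp_all add: scal_def)

lemma of_nat_eq_scal: "of_nat n = scal (of_nat n)"
  by (simp add: scal_def)

lemma scal_uminus: "scal (- c) = - scal (c::'k::ring_1)"
  by (simp add: scal_def single_uminus)

lemma scal_mult_single: "scal c * single w a = single w (c * a)"
  by (simp add: scal_def mult_single)

lemma single_mult_scal: "single w a * scal c = single w (c * (a::'k::comm_semiring_1))"
  by (simp add: scal_def mult_single mult.commute)

lemma scal_commute: "scal c * F = F * scal (c::'k::comm_semiring_1)"
proof -
  have "scal c * (\<Sum>w\<in>keys F. single w (lookup F w)) = (\<Sum>w\<in>keys F. single w (lookup F w)) * scal c"
    by (simp add: sum_distrib_left sum_distrib_right scal_mult_single single_mult_scal)
  then show ?thesis by (simp only: sum_single_lookup)
qed

lemma lookup_scal_mult: "lookup (scal c * F) w = c * lookup F w"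
proof -
  have "scal c * F = (\<Sum>v\<in>keys F. single v (c * lookup F v))"
    by (subst sum_single_lookup[symmetric]) (simp add: sum_distrib_left scal_mult_single)
  then show ?thesis
    by (simp add: lookup_sum lookup_single when_def in_keys_iff)
qed

section \<open>Substitution homomorphisms\<close>

definition subst :: "(nat \<Rightarrow> 'k::comm_semiring_1 word_poly) \<Rightarrow> 'k word_poly \<Rightarrow> 'k word_poly" where
  "subst \<sigma> F = (\<Sum>w\<in>keys F. scal (lookup F w) * prod_list (map \<sigma> w))"

lemma subst_superset:
  "finite A \<Longrightarrow> keys F \<subseteq> A
    \<Longrightarrow> subst \<sigma> F = (\<Sum>w\<in>A. scal (lookup F w) * prod_list (map \<sigma> w))"
  unfolding subst_def by (rule sum.mono_neutral_left) (auto simp: in_keys_iff)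

lemma subst_add: "subst \<sigma> (F + G) = subst \<sigma> F + subst \<sigma> G"
proof -
  have "subst \<sigma> (F + G) = (\<Sum>w\<in>keys F \<union> keys G. scal (lookup (F + G) w) * prod_list (map \<sigma> w))"
    by (rule subst_superset) (auto simp: keys_add)
  also have "\<dots> = (\<Sum>w\<in>keys F \<union> keys G. scal (lookup F w) * prod_list (map \<sigma> w))
      + (\<Sum>w\<in>keys F \<union> keys G. scal (lookup G w) * prod_list (map \<sigma> w))"
    by (simp add: lookup_add scal_add distrib_right sum.distrib)
  also have "\<dots> = subst \<sigma> F + subst \<sigma> G"
    by (simp add: subst_superset[symmetric])
  finally show ?thesis .
qed

lemma subst_zero [simp]: "subst \<sigma> 0 = 0"
  by (simp add: subst_def)

lemma subst_sum: "subst \<sigma> (\<Sum>i\<in>I. F i) = (\<Sum>i\<in>I. subst \<sigma> (F i))"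
  by (induction I rule: infinite_finite_induct) (simp_all add: subst_add)

lemma subst_single: "subst \<sigma> (single w a) = scal a * prod_list (map \<sigma> w)"
  by (subst subst_superset[where A = "{w}"]) auto

lemma subst_scal_mult: "subst \<sigma> (scal c * F) = scal c * subst \<sigma> F"
proof -
  have "subst \<sigma> (scal c * F) = (\<Sum>w\<in>keys F. scal (lookup (scal c * F) w) * prod_list (map \<sigma> w))"
    by (rule subst_superset) (auto simp: in_keys_iff lookup_scal_mult)
  then show ?thesis
    by (simp add: subst_def lookup_scal_mult sum_distrib_left scal_mult[symmetric] mult.assoc)
qed

lemma subst_mult: "subst \<sigma> (F * G) = subst \<sigma> F * subst \<sigma> G"
proof -
  let ?m = "\<lambda>w. prod_list (map \<sigma> w)"
  have "F * G = (\<Sum>u\<in>keys F. single u (lookup F u)) * (\<Sum>v\<in>keys G. single v (lookup G v))"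
    by (simp only: sum_single_lookup)
  also have "\<dots> = (\<Sum>u\<in>keys F. \<Sum>v\<in>keys G. single (u @ v) (lookup F u * lookup G v))"
    by (simp add: sum_distrib_left sum_distrib_right mult_single plus_list_def sum.swap[of _ "keys G"])
  finally have "subst \<sigma> (F * G) = (\<Sum>u\<in>keys F. \<Sum>v\<in>keys G. scal (lookup F u * lookup G v) * ?m (u @ v))"
    by (simp add: subst_sum subst_single)
  also have "\<dots> = (\<Sum>u\<in>keys F. \<Sum>v\<in>keys G. (scal (lookup F u) * ?m u) * (scal (lookup G v) * ?m v))"
  proof (intro sum.cong refl)
    fix u v
    have "scal (lookup F u * lookup G v) * ?m (u @ v) = scal (lookup F u) * (scal (lookup G v) * ?m u) * ?m v"
      by (simp add: scal_mult[symmetric] mult.assoc)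
    also have "\<dots> = (scal (lookup F u) * ?m u) * (scal (lookup G v) * ?m v)"
      by (simp only: scal_commute[of "lookup G v" "?m u"] mult.assoc)
    finally show "scal (lookup F u * lookup G v) * ?m (u @ v) = (scal (lookup F u) * ?m u) * (scal (lookup G v) * ?m v)" .
  qed
  also have "\<dots> = subst \<sigma> F * subst \<sigma> G"
    by (simp add: subst_def sum_distrib_left sum_distrib_right sum.swap[of _ "keys G"])
  finally show ?thesis .
qed

lemma subst_one: "subst \<sigma> 1 = 1"
proof -
  have "subst \<sigma> (single 0 1) = 1"
    by (simp only: subst_single) (simp add: zero_list_def)
  then show ?thesis by simp
qed

lemma subst_power: "subst \<sigma> (F ^ n) = subst \<sigma> F ^ n"
  by (induction n) (simp_all add: subst_one subst_mult)

lemma subst_var: "subst \<sigma> (single [i] 1) = \<sigma> i"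
  by (simp add: subst_single)

lemma lookup_subst_Nil:
  assumes "\<And>i. lookup (\<sigma> i) [] = 0"
  shows "lookup (subst \<sigma> F) [] = lookup F []"
proof -
  have prod: "lookup (prod_list (map \<sigma> w)) [] = (if w = [] then 1 else 0)" for w
    by (induction w) (simp_all add: lookup_mult_Nil lookup_one zero_list_def assms)
  show ?thesis
    by (simp add: subst_def lookup_sum lookup_scal_mult prod in_keys_iff if_distrib sum.delta cong: if_cong)
qed

section \<open>A commutator identity in characteristic p\<close>

text \<open>deg_part a b n j is the sum of the words of length n in a and b with exactly j letters b,
  i.e. the part of (a + b)^n of degree j in b.\<close>

fun deg_part :: "'a::ring_1 \<Rightarrow> 'a \<Rightarrow> nat \<Rightarrow> nat \<Rightarrow> 'a" where
  "deg_part a b 0 j = (if j = 0 then 1 else 0)"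
| "deg_part a b (Suc n) j = deg_part a b n j * a + (if j = 0 then 0 else deg_part a b n (j - 1) * b)"

lemma deg_part_commute:
  assumes "s * a = a * s" and "s * b = b * s"
  shows "s * deg_part a b n j = deg_part a b n j * s"
proof (induction n arbitrary: j)
  case (Suc n)
  have "s * (deg_part a b n i * c) = deg_part a b n i * c * s" if "s * c = c * s" for i c
    by (metis Suc.IH that mult.assoc)
  with assms show ?case by (simp add: distrib_left distrib_right)
qed simp

lemma deg_part_eq_0: "n < j \<Longrightarrow> deg_part a b n j = 0"
  by (induction n arbitrary: j) auto

lemma deg_part_0: "deg_part a b n 0 = a ^ n"
  by (induction n) (simp_all add: power_commutes)

lemma deg_part_top: "deg_part a b n n = b ^ n"
  by (induction n) (simp_all add: deg_part_eq_0 power_commutes)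

lemma deg_part_1_commutator: "deg_part a (a * y - y * a) n 1 = a ^ n * y - y * a ^ n"
proof (induction n)
  case (Suc n)
  have "deg_part a (a * y - y * a) (Suc n) 1 = (a ^ n * y - y * a ^ n) * a + a ^ n * (a * y - y * a)"
    using Suc.IH by (simp add: deg_part_0)
  also have "\<dots> = (a ^ n * a) * y - y * (a ^ n * a)"
    by (simp add: algebra_simps)
  finally show ?case by (simp only: power_Suc2)
qed simp

lemma power_add_scaled:
  assumes sa: "s * a = a * s" and sb: "s * b = b * s"
  shows "(a + s * b) ^ n = (\<Sum>j\<le>n. s ^ j * deg_part a b n j)"
proof (induction n)
  case (Suc n)
  let ?D = "deg_part a b n"
  have shift: "s ^ j * (?D j * (s * b)) = s ^ Suc j * (?D j * b)" for j
  proof -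
    have "s ^ j * (?D j * (s * b)) = s ^ j * ((s * ?D j) * b)"
      by (simp only: deg_part_commute[OF sa sb] mult.assoc)
    then show ?thesis by (simp only: power_Suc2 mult.assoc)
  qed
  have "(a + s * b) ^ Suc n = (\<Sum>j\<le>n. s ^ j * ?D j) * (a + s * b)"
    by (simp only: Suc.IH power_Suc2)
  also have "\<dots> = (\<Sum>j\<le>n. s ^ j * (?D j * a)) + (\<Sum>j\<le>n. s ^ Suc j * (?D j * b))"
    by (simp only: distrib_left sum_distrib_right sum.distrib shift mult.assoc)
  also have "(\<Sum>j\<le>n. s ^ j * (?D j * a)) = (\<Sum>j\<le>Suc n. s ^ j * (?D j * a))"
    by (simp add: deg_part_eq_0)
  also have "(\<Sum>j\<le>n. s ^ Suc j * (?D j * b)) = (\<Sum>j\<le>Suc n. s ^ j * (if j = 0 then 0 else ?D (j - 1) * b))"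
    by (simp only: sum.atMost_Suc_shift) simp
  also have "(\<Sum>j\<le>Suc n. s ^ j * (?D j * a)) + (\<Sum>j\<le>Suc n. s ^ j * (if j = 0 then 0 else ?D (j - 1) * b))
      = (\<Sum>j\<le>Suc n. s ^ j * deg_part a b (Suc n) j)"
    by (simp add: sum.distrib distrib_left)
  finally show ?case .
qed simp

lemma power_sum_char_eq_0:
  fixes p :: nat
  assumes "CHAR('a::idom) = p" and "1 \<le> m" and "m + 2 \<le> p"
  shows "(\<Sum>t<p. (of_nat t :: 'a) ^ m) = 0"
  using assms(2,3)
proof (induction m rule: less_induct)
  case (less m)
  define S where "S i = (\<Sum>t<p. (of_nat t :: 'a) ^ i)" for i
  have p0: "(of_nat p :: 'a) = 0"
    using assms(1) by (metis of_nat_CHAR)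
  have binomial: "(of_nat t + 1) ^ Suc m = (\<Sum>i\<le>m. of_nat (Suc m choose i) * (of_nat t :: 'a) ^ i) + of_nat t ^ Suc m" for t
    using binomial_ring[of "of_nat t" "1::'a" "Suc m"] by (simp del: power_Suc add: sum.atMost_Suc)
  have "(\<Sum>i\<le>m. of_nat (Suc m choose i) * S i) = (\<Sum>t<p. (of_nat t + 1) ^ Suc m - (of_nat t) ^ Suc m)"
    by (simp only: binomial add_diff_cancel_right' S_def sum_distrib_left sum.swap[of _ "{..<p}"])
  also have "\<dots> = 0"
    using sum_lessThan_telescope[of "\<lambda>t. (of_nat t :: 'a) ^ Suc m" p] p0 by (simp add: add.commute)
  finally have "(\<Sum>i\<le>m. of_nat (Suc m choose i) * S i) = 0" .
  moreover have "S i = 0" if "i < m" for i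
  proof (cases "i = 0")
    case True
    then show ?thesis using p0 by (simp add: S_def)
  next
    case False
    with that less show ?thesis unfolding S_def by simp
  qed
  ultimately have "of_nat (Suc m) * S m = 0"
    by (simp add: lessThan_Suc_atMost[symmetric])
  moreover have "\<not> CHAR('a) dvd Suc m"
    using less.prems assms(1) by (auto dest: dvd_imp_le)
  ultimately show ?case by (simp add: S_def of_nat_eq_0_iff_char_dvd del: of_nat_Suc)
qed

lemma power_sum_char:
  fixes p :: nat
  assumes "CHAR('a::idom) = p" and "m + 2 \<le> p"
  shows "(\<Sum>t\<in>{1..<p}. (of_nat t :: 'a) ^ m) = (if m = 0 then -1 else 0)"
proof (cases "m = 0")
  case True
  have "(of_nat p :: 'a) = 0"
    using assms(1) by (metis of_nat_CHAR)
  then have "(of_nat (p - 1) :: 'a) + 1 = 0"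
    using assms(2) by (simp add: of_nat_diff)
  with True show ?thesis by (simp add: eq_neg_iff_add_eq_0)
next
  case False
  have "{..<p} = insert 0 {1..<p}" using assms(2) by auto
  with False power_sum_char_eq_0[OF assms(1), of m] assms(2) show ?thesis by (simp add: zero_power)
qed

lemma of_nat_power_sum_eq_scal:
  "(\<Sum>t\<in>A. (of_nat t :: 'k::comm_semiring_1 word_poly) ^ m) = scal (\<Sum>t\<in>A. of_nat t ^ m)"
proof -
  have "(\<Sum>t\<in>A. (of_nat t :: 'k word_poly) ^ m) = of_nat (\<Sum>t\<in>A. t ^ m)"
    by simp
  also have "\<dots> = scal (of_nat (\<Sum>t\<in>A. t ^ m))"
    by (rule of_nat_eq_scal)
  finally show ?thesis by simp
qed

lemma commutator_power_eq_sum_powers: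
  fixes X Y :: "'k::field word_poly" and p :: nat
  assumes char: "CHAR('k) = p" and p: "2 \<le> p"
  defines "C \<equiv> X * Y - Y * X"
  shows "(\<Sum>t\<in>{1..<p}. scal (inverse (of_nat t))
            * ((X + of_nat t * C) ^ p - X ^ p - of_nat t ^ p * C ^ p))
         = Y * X ^ p - X ^ p * Y"
proof -
  let ?D = "deg_part X C p"
  have summand: "scal (inverse (of_nat t)) * ((X + of_nat t * C) ^ p - X ^ p - of_nat t ^ p * C ^ p)
      = (\<Sum>j\<in>{1..<p}. of_nat t ^ (j - 1) * ?D j)" if t: "t \<in> {1..<p}" for t
  proof -
    have "(X + of_nat t * C) ^ p = (\<Sum>j\<le>p. of_nat t ^ j * ?D j)"
      by (rule power_add_scaled) (simp_all add: mult_of_nat_commute)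
    also have "{..p} = insert 0 (insert p {1..<p})"
      using p by auto
    finally have expand: "(X + of_nat t * C) ^ p - X ^ p - of_nat t ^ p * C ^ p
        = (\<Sum>j\<in>{1..<p}. of_nat t ^ j * ?D j)"
      using p by (simp add: deg_part_0 deg_part_top)
    have "\<not> CHAR('k) dvd t"
      using t char by (auto dest: dvd_imp_le)
    then have inverse: "scal (inverse (of_nat t)) * (of_nat t :: 'k word_poly) = 1"
      by (simp add: of_nat_eq_scal scal_mult of_nat_eq_0_iff_char_dvd)
    have cancel: "scal (inverse (of_nat t)) * (of_nat t ^ j * ?D j) = of_nat t ^ (j - 1) * ?D j"
      if "j \<in> {1..<p}" for j
      using that by (cases j) (simp_all add: mult.assoc[symmetric] inverse)
    show ?thesis
      by (simp only: expand sum_distrib_left cancel cong: sum.cong)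
  qed
  have coefficient: "(\<Sum>t\<in>{1..<p}. (of_nat t :: 'k word_poly) ^ (j - 1)) = (if j = 1 then -1 else 0)"
    if "j \<in> {1..<p}" for j
    using that power_sum_char[OF char, of "j - 1"] by (auto simp: of_nat_power_sum_eq_scal scal_uminus)
  have "(\<Sum>t\<in>{1..<p}. scal (inverse (of_nat t)) * ((X + of_nat t * C) ^ p - X ^ p - of_nat t ^ p * C ^ p))
      = (\<Sum>t\<in>{1..<p}. \<Sum>j\<in>{1..<p}. of_nat t ^ (j - 1) * ?D j)"
    by (rule sum.cong) (simp_all add: summand)
  also have "\<dots> = (\<Sum>j\<in>{1..<p}. (\<Sum>t\<in>{1..<p}. (of_nat t :: 'k word_poly) ^ (j - 1)) * ?D j)"
    by (subst sum.swap) (simp only: sum_distrib_right)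
  also have "\<dots> = (\<Sum>j\<in>{1..<p}. if j = 1 then - ?D j else 0)"
  proof (rule sum.cong[OF refl])
    fix j assume "j \<in> {1..<p}"
    then show "(\<Sum>t\<in>{1..<p}. (of_nat t :: 'k word_poly) ^ (j - 1)) * ?D j = (if j = 1 then - ?D j else 0)"
      by (simp only: coefficient) simp
  qed
  also have "\<dots> = - ?D 1"
    using p by (simp add: sum.delta)
  also have "\<dots> = Y * X ^ p - X ^ p * Y"
    by (simp only: C_def deg_part_1_commutator) simp
  finally show ?thesis .
qed

lemma lookup_in_ncp_iff [simp]: "lookup F \<in> ncp \<longleftrightarrow> lookup F [] = 0"
  by (simp add: ncp_def flip: keys.rep_eq)

lemma ncp_obtain:
  assumes "f \<in> ncp"
  obtains F where "f = lookup F" and "lookup F [] = 0"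
proof
  show "f = lookup (Abs_poly_mapping f)" "lookup (Abs_poly_mapping f) [] = 0"
    using assms by (simp_all add: ncp_def)
qed

lemma nc_add_lookup: "nc_add (lookup F) (lookup G) = lookup (F + G)"
  by (simp add: nc_add_def fun_eq_iff lookup_add)

lemma nc_diff_lookup: "nc_diff (lookup F) (lookup G) = lookup (F - G)"
  by (simp add: nc_diff_def fun_eq_iff lookup_minus)

lemma nc_smult_lookup: "nc_smult c (lookup F) = lookup (scal c * F)"
  by (simp add: nc_smult_def fun_eq_iff lookup_scal_mult)

lemma nc_mult_lookup: "nc_mult (lookup F) (lookup G) = lookup (F * G)"
  by (simp add: nc_mult_def fun_eq_iff lookup_mult_words)

lemma nc_zero_lookup: "nc_zero = lookup 0"
  by (simp add: nc_zero_def fun_eq_iff)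

lemma nc_var_lookup: "nc_var i = lookup (single [i] 1)"
  by (simp add: nc_var_def fun_eq_iff lookup_single when_def eq_commute)

lemma nc_pow_lookup: "nc_pow (lookup F) (Suc n) = lookup (F ^ Suc n)"
  by (induction n) (simp_all add: nc_mult_lookup)

definition nc_commutator :: "(nat list \<Rightarrow> 'k::field) \<Rightarrow> (nat list \<Rightarrow> 'k) \<Rightarrow> nat list \<Rightarrow> 'k" where
  "nc_commutator f g = nc_diff (nc_mult f g) (nc_mult g f)"

lemma nc_commutator_lookup: "nc_commutator (lookup F) (lookup G) = lookup (F * G - G * F)"
  by (simp add: nc_commutator_def nc_mult_lookup nc_diff_lookup)

lemma nc_commutator_add: "nc_commutator (nc_add f g) h = nc_add (nc_commutator f h) (nc_commutator g h)"
  by (simp add: nc_commutator_def nc_diff_def nc_add_def nc_mult_def fun_eq_iff algebra_simps sum.distrib)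

lemma nc_commutator_smult: "nc_commutator (nc_smult c f) h = nc_smult c (nc_commutator f h)"
  by (simp add: nc_commutator_def nc_diff_def nc_smult_def nc_mult_def fun_eq_iff algebra_simps sum_distrib_left)

lemma nc_commutator_zero: "nc_commutator nc_zero h = nc_zero"
  by (simp add: nc_commutator_def nc_diff_def nc_zero_def nc_mult_def)

lemma nc_endo_id: "nc_endo id"
  by (simp add: nc_endo_def)

lemma nc_endo_comp: "nc_endo \<psi> \<Longrightarrow> nc_endo \<phi> \<Longrightarrow> nc_endo (\<psi> \<circ> \<phi>)"
  by (simp add: nc_endo_def)

lemma nc_zero_in_ncp: "nc_zero \<in> ncp"
  by (simp add: nc_zero_lookup)

lemma nc_endo_zero:
  assumes "nc_endo \<psi>"
  shows "\<psi> nc_zero = nc_zero"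
proof -
  have "\<psi> (nc_smult 0 nc_zero) = nc_smult 0 (\<psi> nc_zero)"
    using assms nc_zero_in_ncp unfolding nc_endo_def by blast
  then show ?thesis by (simp add: nc_smult_def nc_zero_def)
qed

lemma nc_pow_in_ncp: "f \<in> ncp \<Longrightarrow> nc_pow f (Suc n) \<in> ncp"
  by (erule ncp_obtain) (simp add: nc_pow_lookup lookup_mult_Nil)

lemma nc_endo_pow:
  assumes "nc_endo \<psi>" and "f \<in> ncp"
  shows "\<psi> (nc_pow f (Suc n)) = nc_pow (\<psi> f) (Suc n)"
proof (induction n)
  case (Suc n)
  then show ?case
    using assms nc_pow_in_ncp[OF assms(2), of n] by (simp add: nc_endo_def)
qed simp

text \<open>Only the values on ncp matter: there Abs_poly_mapping inverts lookup.\<close>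

definition nc_subst :: "(nat \<Rightarrow> 'k::field word_poly) \<Rightarrow> (nat list \<Rightarrow> 'k) \<Rightarrow> nat list \<Rightarrow> 'k" where
  "nc_subst \<sigma> f = lookup (subst \<sigma> (Abs_poly_mapping f))"

lemma nc_subst_lookup: "nc_subst \<sigma> (lookup F) = lookup (subst \<sigma> F)"
  by (simp add: nc_subst_def)

lemma nc_endo_nc_subst:
  fixes \<sigma> :: "nat \<Rightarrow> 'k::field word_poly"
  assumes "\<And>i. lookup (\<sigma> i) [] = 0"
  shows "nc_endo (nc_subst \<sigma>)"
  unfolding nc_endo_def
proof (intro conjI ballI allI)
  fix f :: "nat list \<Rightarrow> 'k" assume "f \<in> ncp"
  then show "nc_subst \<sigma> f \<in> ncp"
    by (rule ncp_obtain) (simp add: nc_subst_lookup lookup_subst_Nil assms)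
next
  fix c and f :: "nat list \<Rightarrow> 'k" assume "f \<in> ncp"
  then show "nc_subst \<sigma> (nc_smult c f) = nc_smult c (nc_subst \<sigma> f)"
    by (rule ncp_obtain) (simp add: nc_subst_lookup nc_smult_lookup subst_scal_mult)
next
  fix f g :: "nat list \<Rightarrow> 'k" assume "f \<in> ncp" "g \<in> ncp"
  then obtain F G where "f = lookup F" "g = lookup G"
    by (metis ncp_obtain)
  then show "nc_subst \<sigma> (nc_add f g) = nc_add (nc_subst \<sigma> f) (nc_subst \<sigma> g)"
    and "nc_subst \<sigma> (nc_mult f g) = nc_mult (nc_subst \<sigma> f) (nc_subst \<sigma> g)"
    by (simp_all add: nc_subst_lookup nc_add_lookup subst_add nc_mult_lookup subst_mult)
qed

lemma nc_subst_pow_var: "nc_subst \<sigma> (nc_pow (nc_var i) (Suc n)) = lookup (\<sigma> i ^ Suc n)"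
  by (simp only: nc_var_lookup nc_pow_lookup nc_subst_lookup subst_power subst_var)

section \<open>T-spaces\<close>

lemma nc_tspace_ncp: "nc_tspace (ncp :: (nat list \<Rightarrow> 'k::field) set)"
  unfolding nc_tspace_def
proof (intro conjI ballI allI impI subset_refl nc_zero_in_ncp)
  fix f g :: "nat list \<Rightarrow> 'k" assume "f \<in> ncp" "g \<in> ncp"
  then show "nc_add f g \<in> ncp"
    by (elim ncp_obtain) (simp add: nc_add_lookup lookup_add)
next
  fix c and f :: "nat list \<Rightarrow> 'k" assume "f \<in> ncp"
  then show "nc_smult c f \<in> ncp"
    by (elim ncp_obtain) (simp add: nc_smult_lookup lookup_scal_mult)
qed (simp add: nc_endo_def)

lemma nc_tspace_Inter: "(\<And>V. V \<in> \<V> \<Longrightarrow> nc_tspace V) \<Longrightarrow> \<V> \<noteq> {} \<Longrightarrow> nc_tspace (\<Inter>\<V>)"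
  unfolding nc_tspace_def by blast

lemma nc_tspace_nc_tspace_gen: "f \<in> ncp \<Longrightarrow> nc_tspace (nc_tspace_gen f)"
  unfolding nc_tspace_gen_def by (rule nc_tspace_Inter) (use nc_tspace_ncp in auto)

lemma nc_tspace_gen_least: "nc_tspace V \<Longrightarrow> f \<in> V \<Longrightarrow> nc_tspace_gen f \<subseteq> V"
  by (auto simp: nc_tspace_gen_def)

definition endo_comm_into :: "(nat list \<Rightarrow> 'k::field) set \<Rightarrow> (nat list \<Rightarrow> 'k) set" where
  "endo_comm_into V = {u \<in> ncp. \<forall>\<psi>. nc_endo \<psi> \<longrightarrow> (\<forall>v\<in>ncp. nc_commutator (\<psi> u) v \<in> V)}"

lemma nc_var_in_ncp: "nc_var i \<in> ncp"
  by (simp add: nc_var_lookup lookup_single)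

context
  fixes V :: "(nat list \<Rightarrow> 'k::field) set"
  assumes V: "nc_tspace V"
begin

lemma tspace_lookup_add: "lookup F \<in> V \<Longrightarrow> lookup G \<in> V \<Longrightarrow> lookup (F + G) \<in> V"
  using V by (simp add: nc_tspace_def flip: nc_add_lookup)

lemma tspace_lookup_scal_mult: "lookup F \<in> V \<Longrightarrow> lookup (scal c * F) \<in> V"
  using V by (simp add: nc_tspace_def flip: nc_smult_lookup)

lemma tspace_lookup_uminus: "lookup F \<in> V \<Longrightarrow> lookup (- F) \<in> V"
  using tspace_lookup_scal_mult[of F "- 1"] by (simp add: scal_uminus)

lemma tspace_lookup_diff: "lookup F \<in> V \<Longrightarrow> lookup G \<in> V \<Longrightarrow> lookup (F - G) \<in> V"
  using tspace_lookup_add[OF _ tspace_lookup_uminus] by simp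

lemma tspace_lookup_sum: "(\<And>i. i \<in> I \<Longrightarrow> lookup (F i) \<in> V) \<Longrightarrow> lookup (\<Sum>i\<in>I. F i) \<in> V"
  using V by (induction I rule: infinite_finite_induct)
    (simp_all add: tspace_lookup_add nc_tspace_def flip: nc_zero_lookup)

lemma tspace_lookup_power:
  assumes "nc_pow (nc_var i) n \<in> V" and "0 < n" and "lookup H [] = 0"
  shows "lookup (H ^ n) \<in> V"
proof -
  obtain m where n: "n = Suc m"
    using \<open>0 < n\<close> gr0_implies_Suc by blast
  have "nc_endo (nc_subst (\<lambda>_. H))"
    using assms(3) by (rule nc_endo_nc_subst)
  with V assms(1) have "nc_subst (\<lambda>_. H) (nc_pow (nc_var i) n) \<in> V"
    by (simp add: nc_tspace_def)
  then show ?thesis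
    by (simp only: n nc_subst_pow_var)
qed

lemma tspace_lookup_commutator_power:
  assumes char: "CHAR('k) = p" and p: "2 \<le> p" and gen: "nc_pow (nc_var i) p \<in> V"
    and X: "lookup X [] = 0" and Y: "lookup Y [] = 0"
  shows "lookup (X ^ p * Y - Y * X ^ p) \<in> V"
proof -
  define C where "C = X * Y - Y * X"
  have C: "lookup C [] = 0"
    using X Y by (simp add: C_def lookup_minus lookup_mult_Nil)
  have power: "lookup (H ^ p) \<in> V" if "lookup H [] = 0" for H
    using gen p that by (simp add: tspace_lookup_power)
  have "lookup (\<Sum>t\<in>{1..<p}. scal (inverse (of_nat t))
            * ((X + of_nat t * C) ^ p - X ^ p - of_nat t ^ p * C ^ p)) \<in> V"
  proof (intro tspace_lookup_sum tspace_lookup_scal_mult tspace_lookup_diff)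
    fix t
    show "lookup ((X + of_nat t * C) ^ p) \<in> V"
      by (rule power) (simp add: lookup_add of_nat_eq_scal lookup_scal_mult X C)
    show "lookup (X ^ p) \<in> V"
      by (rule power[OF X])
    have "(of_nat t ^ p :: 'k word_poly) = of_nat (t ^ p)"
      by simp
    also have "\<dots> = scal (of_nat (t ^ p))"
      by (rule of_nat_eq_scal)
    finally show "lookup (of_nat t ^ p * C ^ p) \<in> V"
      using tspace_lookup_scal_mult[OF power[OF C]] by simp
  qed
  then have "lookup (Y * X ^ p - X ^ p * Y) \<in> V"
    unfolding C_def commutator_power_eq_sum_powers[OF char p] .
  then show ?thesis
    using tspace_lookup_uminus by fastforce
qed

lemma nc_tspace_endo_comm_into: "nc_tspace (endo_comm_into V)"
  unfolding nc_tspace_def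
proof (intro conjI ballI allI impI)
  have V_closed: "nc_zero \<in> V" "\<And>f g. f \<in> V \<Longrightarrow> g \<in> V \<Longrightarrow> nc_add f g \<in> V"
      "\<And>c f. f \<in> V \<Longrightarrow> nc_smult c f \<in> V"
    using V unfolding nc_tspace_def by blast+
  have ncp_closed: "\<And>f g. f \<in> ncp \<Longrightarrow> g \<in> ncp \<Longrightarrow> nc_add f g \<in> ncp"
      "\<And>c f. f \<in> ncp \<Longrightarrow> nc_smult c f \<in> (ncp :: (nat list \<Rightarrow> 'k) set)"
    using nc_tspace_ncp unfolding nc_tspace_def by blast+
  show "endo_comm_into V \<subseteq> ncp"
    by (auto simp: endo_comm_into_def)
  show "nc_zero \<in> endo_comm_into V"
    by (simp add: endo_comm_into_def nc_zero_in_ncp nc_endo_zero nc_commutator_zero V_closed)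
  show "nc_add f g \<in> endo_comm_into V" if "f \<in> endo_comm_into V" "g \<in> endo_comm_into V" for f g
    using that by (auto simp: endo_comm_into_def nc_endo_def nc_commutator_add ncp_closed V_closed)
  show "nc_smult c f \<in> endo_comm_into V" if "f \<in> endo_comm_into V" for c f
    using that by (auto simp: endo_comm_into_def nc_endo_def nc_commutator_smult ncp_closed V_closed)
  show "\<phi> f \<in> endo_comm_into V" if \<phi>: "nc_endo \<phi>" and f: "f \<in> endo_comm_into V" for \<phi> f
  proof -
    have "\<phi> f \<in> ncp"
      using that unfolding nc_endo_def endo_comm_into_def by blast
    moreover have "nc_commutator ((\<psi> \<circ> \<phi>) f) v \<in> V" if "nc_endo \<psi>" and "v \<in> ncp" for \<psi> v
      using f nc_endo_comp[OF that(1) \<phi>] that(2) unfolding endo_comm_into_def by blast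
    ultimately show ?thesis
      by (simp add: endo_comm_into_def)
  qed
qed

lemma pow_var_in_endo_comm_into:
  assumes char: "CHAR('k) = p" and p: "2 \<le> p" and gen: "nc_pow (nc_var i) p \<in> V"
  shows "nc_pow (nc_var i) p \<in> endo_comm_into V"
proof -
  obtain m where m: "p = Suc m"
    using p by (metis Suc_le_D numeral_2_eq_2)
  have "nc_commutator (\<psi> (nc_pow (nc_var i) p)) v \<in> V" if \<psi>: "nc_endo \<psi>" and "v \<in> ncp" for \<psi> v
  proof -
    have "\<psi> (nc_var i) \<in> ncp"
      using \<psi> nc_var_in_ncp unfolding nc_endo_def by blast
    then obtain A where A: "\<psi> (nc_var i) = lookup A" "lookup A [] = 0"
      by (rule ncp_obtain)
    obtain B where B: "v = lookup B" "lookup B [] = 0"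
      using \<open>v \<in> ncp\<close> by (rule ncp_obtain)
    have "\<psi> (nc_pow (nc_var i) p) = lookup (A ^ p)"
      by (simp only: m nc_endo_pow[OF \<psi> nc_var_in_ncp] A nc_pow_lookup)
    then show ?thesis
      using tspace_lookup_commutator_power[OF char p gen A(2) B(2)] by (simp add: B nc_commutator_lookup)
  qed
  then show ?thesis
    by (simp add: endo_comm_into_def m nc_pow_in_ncp nc_var_in_ncp)
qed

end

theorem corollary4p3:
  fixes p :: nat and u v :: "nat list \<Rightarrow> 'k::field"
  assumes "prime p" and "CHAR('k) = p"
    and "u \<in> nc_tspace_gen (nc_pow (nc_var 0 :: nat list \<Rightarrow> 'k) p)"
    and "v \<in> ncp"
  shows "nc_diff (nc_mult u v) (nc_mult v u) \<in> nc_tspace_gen (nc_pow (nc_var 0 :: nat list \<Rightarrow> 'k) p)"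
proof -
  let ?g = "nc_pow (nc_var 0 :: nat list \<Rightarrow> 'k) p"
  define T where "T = nc_tspace_gen ?g"
  have p: "2 \<le> p"
    using assms(1) by (rule prime_ge_2_nat)
  then have "?g \<in> ncp"
    by (metis Suc_le_D numeral_2_eq_2 nc_pow_in_ncp nc_var_in_ncp)
  then have T: "nc_tspace T"
    unfolding T_def by (rule nc_tspace_nc_tspace_gen)
  have "?g \<in> T"
    by (simp add: T_def nc_tspace_gen_def)
  then have "?g \<in> endo_comm_into T"
    using T assms(2) p by (intro pow_var_in_endo_comm_into)
  moreover have "nc_tspace (endo_comm_into T)"
    using T by (rule nc_tspace_endo_comm_into)
  ultimately have "T \<subseteq> endo_comm_into T"
    unfolding T_def by (intro nc_tspace_gen_least)
  with assms(3) have "u \<in> endo_comm_into T"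
    by (auto simp: T_def)
  with assms(4) nc_endo_id have "nc_commutator (id u) v \<in> T"
    unfolding endo_comm_into_def by blast
  then show ?thesis
    by (simp add: T_def nc_commutator_def)
qed

end
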